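(* Let $\mathcal G$ be a finite simplicial graph with a base vertex $v$ and a vertex $w\neq v$. Let $\mathcal L$ be the wedge of four copies of $\mathcal G$ glued along $v$. Let $X_{\mathcal L}$ be the universal cover of the Salvetti complex $S_{\mathcal L}$, and let $\Gamma_{\mathcal L}$ and $BB_{\mathcal L}$ be the right-angled Artin group and Bestvina–Brady group of $\mathcal L$, viewed as discrete subgroups of $G=\mathrm{Aut}(X_{\mathcal L})$ via the deck transformation action. Then $\mathrm{Comm}_G(BB_{\mathcal L})\cap\mathrm{Comm}_G(\Gamma_{\mathcal L})$ is not discrete in $G$. In particular, $\mathrm{Comm}_G(BB_{\mathcal L})$ is not discrete.
   Context: For a finite simplicial graph $\mathcal L$, the right-angled Artin group $\Gamma_{\mathcal L}$ has one generator per vertex and relations that generators of adjacent vertices commute. Its Salvetti complex $S_{\mathcal L}$ is the cube complex with one vertex, one oriented edge-loop per vertex of $\mathcal L$, and a $k$-torus (a $k$-cube with opposite faces identified) for each complete subgraph on $k$ vertices; $\pi_1 S_{\mathcal L}=\Gamma_{\mathcal L}$ and its universal cover $X_{\mathcal L}$ is a CAT(0) cube complex. The Bestvina–Brady group $BB_{\mathcal L}$ is the kernel of the homomorphism $\Gamma_{\mathcal L}\to\mathbb Z$ sending every standard generator to $1$. $\mathrm{Aut}(X_{\mathcal L})$ is the group of cubical automorphisms of $X_{\mathcal L}$ with the compact-open topology. $\mathrm{Comm}_G(A)=\{g\in G: gAg^{-1}\cap A$ has finite index in both $A$ and $gAg^{-1}\}$. *)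

theory Defs
  imports "HOL-Analysis.Analysis"
begin

definition simplicial_graph :: "'a set \<Rightarrow> ('a \<Rightarrow> 'a \<Rightarrow> bool) \<Rightarrow> bool" where
  "simplicial_graph V E \<longleftrightarrow> finite V \<and> (\<forall>x y. E x y \<longrightarrow> x \<in> V \<and> y \<in> V \<and> x \<noteq> y \<and> E y x)"

text \<open>Copy i of vertex x in the wedge; all copies of the base vertex v are identified with (0,v).\<close>
definition wedge_vert :: "'a \<Rightarrow> nat \<Rightarrow> 'a \<Rightarrow> nat \<times> 'a" where
  "wedge_vert v i x = (if x = v then (0, v) else (i, x))"

definition wedge4_V :: "'a set \<Rightarrow> 'a \<Rightarrow> (nat \<times> 'a) set" where
  "wedge4_V V v = {wedge_vert v i x | i x. i < 4 \<and> x \<in> V}"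

definition wedge4_E :: "('a \<Rightarrow> 'a \<Rightarrow> bool) \<Rightarrow> 'a \<Rightarrow> nat \<times> 'a \<Rightarrow> nat \<times> 'a \<Rightarrow> bool" where
  "wedge4_E E v p q \<longleftrightarrow> (\<exists>i x y. i < 4 \<and> E x y \<and> p = wedge_vert v i x \<and> q = wedge_vert v i y)"

text \<open>A letter (s, True) is the generator s, (s, False) its inverse.\<close>
definition raag_words :: "'b set \<Rightarrow> ('b \<times> bool) list set" where
  "raag_words V = {w. \<forall>l \<in> set w. fst l \<in> V}"

inductive raag_eq :: "'b set \<Rightarrow> ('b \<Rightarrow> 'b \<Rightarrow> bool) \<Rightarrow> ('b \<times> bool) list \<Rightarrow> ('b \<times> bool) list \<Rightarrow> bool"
  for V E where
  refl: "w \<in> raag_words V \<Longrightarrow> raag_eq V E w w"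
| sym: "raag_eq V E u w \<Longrightarrow> raag_eq V E w u"
| trans: "raag_eq V E u w \<Longrightarrow> raag_eq V E w z \<Longrightarrow> raag_eq V E u z"
| cancel: "s \<in> V \<Longrightarrow> a \<in> raag_words V \<Longrightarrow> b \<in> raag_words V \<Longrightarrow>
           raag_eq V E (a @ [(s, e), (s, \<not> e)] @ b) (a @ b)"
| commute: "E s t \<Longrightarrow> s \<in> V \<Longrightarrow> t \<in> V \<Longrightarrow> a \<in> raag_words V \<Longrightarrow> b \<in> raag_words V \<Longrightarrow>
           raag_eq V E (a @ [(s, e), (t, f)] @ b) (a @ [(t, f), (s, e)] @ b)"

definition raag_class :: "'b set \<Rightarrow> ('b \<Rightarrow> 'b \<Rightarrow> bool) \<Rightarrow> ('b \<times> bool) list \<Rightarrow> ('b \<times> bool) list set" where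
  "raag_class V E w = {u. raag_eq V E w u}"

text \<open>Vertices of X_L = elements of the RAAG.\<close>
definition X_verts :: "'b set \<Rightarrow> ('b \<Rightarrow> 'b \<Rightarrow> bool) \<Rightarrow> ('b \<times> bool) list set set" where
  "X_verts V E = raag_class V E ` raag_words V"

definition clique :: "'b set \<Rightarrow> ('b \<Rightarrow> 'b \<Rightarrow> bool) \<Rightarrow> 'b set \<Rightarrow> bool" where
  "clique V E \<sigma> \<longleftrightarrow> \<sigma> \<subseteq> V \<and> (\<forall>s\<in>\<sigma>. \<forall>t\<in>\<sigma>. s \<noteq> t \<longrightarrow> E s t)"

text \<open>Vertex set of the cube of X_L based at g = [u] spanned by the clique \<sigma>:
  {g \<cdot> \<Prod>T | T \<subseteq> \<sigma>}.\<close>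
definition X_cube :: "'b set \<Rightarrow> ('b \<Rightarrow> 'b \<Rightarrow> bool) \<Rightarrow> ('b \<times> bool) list \<Rightarrow> 'b set \<Rightarrow> ('b \<times> bool) list set set" where
  "X_cube V E u \<sigma> = {raag_class V E (u @ map (\<lambda>s. (s, True)) ts) | ts. distinct ts \<and> set ts \<subseteq> \<sigma>}"

definition X_cubes :: "'b set \<Rightarrow> ('b \<Rightarrow> 'b \<Rightarrow> bool) \<Rightarrow> ('b \<times> bool) list set set set" where
  "X_cubes V E = {X_cube V E u \<sigma> | u \<sigma>. u \<in> raag_words V \<and> clique V E \<sigma>}"

text \<open>A cubical automorphism is recorded by its (bijective) action on vertices, which must carry
  vertex sets of cubes exactly onto vertex sets of cubes; it is the identity off the vertex set
  (canonical representative).\<close>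
definition cub_aut :: "'b set \<Rightarrow> ('b \<Rightarrow> 'b \<Rightarrow> bool) \<Rightarrow>
    (('b \<times> bool) list set \<Rightarrow> ('b \<times> bool) list set) set" where
  "cub_aut V E = {f. bij_betw f (X_verts V E) (X_verts V E)
      \<and> (\<forall>x. x \<notin> X_verts V E \<longrightarrow> f x = x)
      \<and> (\<forall>C. C \<subseteq> X_verts V E \<longrightarrow> (C \<in> X_cubes V E \<longleftrightarrow> f ` C \<in> X_cubes V E))}"

definition aut_inv :: "'b set \<Rightarrow> ('b \<Rightarrow> 'b \<Rightarrow> bool) \<Rightarrow>
    (('b \<times> bool) list set \<Rightarrow> ('b \<times> bool) list set) \<Rightarrow> ('b \<times> bool) list set \<Rightarrow> ('b \<times> bool) list set" where
  "aut_inv V E f = (\<lambda>x. if x \<in> X_verts V E then inv_into (X_verts V E) f x else x)"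

text \<open>Compact-open topology on Aut(X_L): since X_L is locally finite, it is the topology of
  pointwise convergence on vertices, generated by the sets of automorphisms agreeing with a given
  one on a finite set of vertices.\<close>
definition aut_topology :: "'b set \<Rightarrow> ('b \<Rightarrow> 'b \<Rightarrow> bool) \<Rightarrow>
    (('b \<times> bool) list set \<Rightarrow> ('b \<times> bool) list set) topology" where
  "aut_topology V E = topology_generated_by
     {{f \<in> cub_aut V E. \<forall>x\<in>F. f x = \<phi> x} | F \<phi>. finite F \<and> F \<subseteq> X_verts V E \<and> \<phi> \<in> cub_aut V E}"

definition deck :: "'b set \<Rightarrow> ('b \<Rightarrow> 'b \<Rightarrow> bool) \<Rightarrow> ('b \<times> bool) list \<Rightarrow>
    ('b \<times> bool) list set \<Rightarrow> ('b \<times> bool) list set" where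
  "deck V E u = (\<lambda>x. if x \<in> X_verts V E then raag_class V E (u @ (SOME w. w \<in> x)) else x)"

definition exp_sum :: "('b \<times> bool) list \<Rightarrow> int" where
  "exp_sum w = sum_list (map (\<lambda>l. if snd l then 1 else -1) w)"

definition RAAG_sub where
  "RAAG_sub V E = deck V E ` raag_words V"

definition BB_sub where
  "BB_sub V E = deck V E ` {w \<in> raag_words V. exp_sum w = 0}"

definition finite_index :: "('c \<Rightarrow> 'c) set \<Rightarrow> ('c \<Rightarrow> 'c) set \<Rightarrow> bool" where
  "finite_index K H \<longleftrightarrow> finite {(\<lambda>k. h \<circ> k) ` K | h. h \<in> H}"

definition commensurator where
  "commensurator V E A = {g \<in> cub_aut V E.
     (let B = (\<lambda>a. g \<circ> a \<circ> aut_inv V E g) ` A in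
        finite_index (B \<inter> A) A \<and> finite_index (B \<inter> A) B)}"

definition discrete_in :: "'c topology \<Rightarrow> 'c set \<Rightarrow> bool" where
  "discrete_in T S \<longleftrightarrow> subtopology T S = discrete_topology S"

end

theory Submission
  imports Defs
begin

text \<open>
  Let P be the generators of copy 1 of G in the wedge and \<tau> the involution exchanging copies 2
  and 3. Given N > 0 and a residue q0, rewrite a word letter by letter, keeping track of the signed
  number q of P-letters read so far, and apply \<tau> to every letter read while q = q0 (mod N).
  Since \<tau> fixes P and every vertex adjacent to P, this respects the defining relations of the
  right-angled Artin group and maps cubes of X_L to cubes, hence induces an involutive cubical
  automorphism f. If the P-count of a word l is divisible by N, conjugating the deck transformation
  of l by f gives the deck transformation of the rewritten word, and these l form a subgroup of
  index at most N; as rewriting preserves the exponent sum, f commensurates both \<Gamma>_L and BB_L.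
  Finally, if M bounds the word lengths of finitely many given vertices, the choice N = 2M + 3,
  q0 = M + 1 makes f fix all of them, while f still moves a^(M+1) b to a^(M+1) c, where a, b, c
  are the copies of w in copies 1, 2, 3. So the identity is not isolated.
\<close>

lemma raag_words_Nil [simp]: "[] \<in> raag_words V"
  by (simp add: raag_words_def)

lemma raag_words_Cons [simp]: "l # w \<in> raag_words V \<longleftrightarrow> fst l \<in> V \<and> w \<in> raag_words V"
  by (auto simp: raag_words_def)

lemma raag_words_append [simp]: "a @ b \<in> raag_words V \<longleftrightarrow> a \<in> raag_words V \<and> b \<in> raag_words V"
  by (auto simp: raag_words_def)

lemma raag_eq_raag_words: "raag_eq V E u w \<Longrightarrow> u \<in> raag_words V \<and> w \<in> raag_words V"
  by (induction rule: raag_eq.induct) auto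

lemma raag_eq_append_left:
  "raag_eq V E u w \<Longrightarrow> c \<in> raag_words V \<Longrightarrow> raag_eq V E (c @ u) (c @ w)"
proof (induction rule: raag_eq.induct)
  case (cancel s a b e)
  then show ?case using raag_eq.cancel[of s V "c @ a" b E e] by simp
next
  case (commute s t a b e e')
  then show ?case using raag_eq.commute[of E s t V "c @ a" b e e'] by simp
qed (auto intro: raag_eq.intros)

lemma raag_eq_append_right:
  "raag_eq V E u w \<Longrightarrow> c \<in> raag_words V \<Longrightarrow> raag_eq V E (u @ c) (w @ c)"
proof (induction rule: raag_eq.induct)
  case (cancel s a b e)
  then show ?case using raag_eq.cancel[of s V a "b @ c" E e] by simp
next
  case (commute s t a b e e')
  then show ?case using raag_eq.commute[of E s t V a "b @ c" e e'] by simp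
qed (auto intro: raag_eq.intros)

definition word_inv :: "('b \<times> bool) list \<Rightarrow> ('b \<times> bool) list" where
  "word_inv w = rev (map (\<lambda>(s, e). (s, \<not> e)) w)"

lemma word_inv_simps [simp]:
  "word_inv [] = []"
  "word_inv ((s, e) # w) = word_inv w @ [(s, \<not> e)]"
  "word_inv (a @ b) = word_inv b @ word_inv a"
  by (auto simp: word_inv_def)

lemma word_inv_in_raag_words [simp]: "word_inv w \<in> raag_words V \<longleftrightarrow> w \<in> raag_words V"
  by (auto simp: word_inv_def raag_words_def)

lemma raag_eq_word_inv:
  assumes "w \<in> raag_words V"
  shows "raag_eq V E (w @ word_inv w) [] \<and> raag_eq V E (word_inv w @ w) []"
  using assms
proof (induction w)
  case Nil
  then show ?case by (auto intro: raag_eq.refl)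
next
  case (Cons l w)
  obtain s e where l: "l = (s, e)" by fastforce
  have s: "s \<in> V" and w: "w \<in> raag_words V" using Cons.prems l by auto
  have "raag_eq V E ([(s, e)] @ (w @ word_inv w) @ [(s, \<not> e)]) ([(s, e)] @ [] @ [(s, \<not> e)])"
    using Cons.IH w s by (intro raag_eq_append_left raag_eq_append_right) auto
  moreover have "raag_eq V E ([] @ [(s, e), (s, \<not> e)] @ []) []"
    using raag_eq.cancel[of s V "[]" "[]" E e] s by simp
  ultimately have right: "raag_eq V E (l # w @ word_inv (l # w)) []"
    using l by (auto intro: raag_eq.trans)
  have "raag_eq V E (word_inv w @ [(s, \<not> e), (s, \<not> \<not> e)] @ w) (word_inv w @ w)"
    using raag_eq.cancel[of s V "word_inv w" w E "\<not> e"] s w by simp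
  then have left: "raag_eq V E (word_inv (l # w) @ l # w) []"
    using Cons.IH w l by (auto intro: raag_eq.trans)
  from right left show ?case by simp
qed

lemma raag_class_self: "u \<in> raag_words V \<Longrightarrow> u \<in> raag_class V E u"
  by (simp add: raag_class_def raag_eq.refl)

lemma raag_class_eq_iff:
  assumes "u \<in> raag_words V" "w \<in> raag_words V"
  shows "raag_class V E u = raag_class V E w \<longleftrightarrow> raag_eq V E u w"
proof
  assume "raag_class V E u = raag_class V E w"
  then have "w \<in> raag_class V E u"
    using raag_class_self[OF assms(2), of E] by simp
  then show "raag_eq V E u w"
    by (simp add: raag_class_def)
next
  assume "raag_eq V E u w"
  then show "raag_class V E u = raag_class V E w"
    unfolding raag_class_def by (auto intro: raag_eq.trans raag_eq.sym)
qed

lemma raag_class_eqI: "raag_eq V E u w \<Longrightarrow> raag_class V E u = raag_class V E w"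
  using raag_class_eq_iff raag_eq_raag_words by metis

lemma X_verts_iff: "x \<in> X_verts V E \<longleftrightarrow> (\<exists>u \<in> raag_words V. x = raag_class V E u)"
  by (auto simp: X_verts_def)

lemma raag_class_in_X_verts [simp]: "u \<in> raag_words V \<Longrightarrow> raag_class V E u \<in> X_verts V E"
  by (auto simp: X_verts_def)

lemma raag_eq_some_elem:
  assumes "u \<in> raag_words V"
  shows "raag_eq V E u (SOME w. w \<in> raag_class V E u)"
proof -
  have "(SOME w. w \<in> raag_class V E u) \<in> raag_class V E u"
    using raag_class_self[OF assms] by (rule someI)
  then show ?thesis
    by (simp add: raag_class_def)
qed

lemma X_verts_fun_eqI:
  assumes "\<And>u. u \<in> raag_words V \<Longrightarrow> \<phi> (raag_class V E u) = \<psi> (raag_class V E u)"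
    and "\<And>x. x \<notin> X_verts V E \<Longrightarrow> \<phi> x = \<psi> x"
  shows "\<phi> = \<psi>"
proof
  fix x
  show "\<phi> x = \<psi> x"
    using assms by (cases "x \<in> X_verts V E") (auto simp: X_verts_iff)
qed

lemma deck_raag_class:
  assumes "u \<in> raag_words V" "w \<in> raag_words V"
  shows "deck V E u (raag_class V E w) = raag_class V E (u @ w)"
proof -
  have "raag_class V E (u @ (SOME w'. w' \<in> raag_class V E w)) = raag_class V E (u @ w)"
    by (rule raag_class_eqI[symmetric] raag_eq_append_left raag_eq_some_elem assms)+
  then show ?thesis
    using assms(2) by (simp add: deck_def)
qed

lemma deck_outside: "x \<notin> X_verts V E \<Longrightarrow> deck V E u x = x"
  by (simp add: deck_def)

lemma deck_append:
  assumes "u \<in> raag_words V" "w \<in> raag_words V"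
  shows "deck V E u \<circ> deck V E w = deck V E (u @ w)"
  by (rule X_verts_fun_eqI[where V = V and E = E]) (simp_all add: assms deck_raag_class deck_outside)

lemma deck_Nil: "deck V E [] = id"
  by (rule X_verts_fun_eqI[where V = V and E = E]) (simp_all add: deck_raag_class deck_outside)

lemma deck_raag_eq:
  assumes "raag_eq V E u u'"
  shows "deck V E u = deck V E u'"
proof (rule X_verts_fun_eqI[where V = V and E = E])
  fix a assume "a \<in> raag_words V"
  then show "deck V E u (raag_class V E a) = deck V E u' (raag_class V E a)"
    using raag_eq_raag_words[OF assms] raag_class_eqI[OF raag_eq_append_right[OF assms]]
    by (simp add: deck_raag_class)
qed (simp add: deck_outside)

lemma deck_word_inv_comp: "u \<in> raag_words V \<Longrightarrow> deck V E (word_inv u) \<circ> deck V E u = id"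
  using raag_eq_word_inv[of u V E] by (simp add: deck_append deck_raag_eq[of V E _ "[]"] deck_Nil)

lemma deck_cancel:
  assumes "u \<in> raag_words V" "w \<in> raag_words V"
  shows "deck V E (u @ word_inv u @ w) = deck V E w"
  using raag_eq_append_right[OF conjunct1[OF raag_eq_word_inv[OF assms(1)]] assms(2)]
  by (simp add: deck_raag_eq)

definition letter_sign :: "('b \<Rightarrow> bool) \<Rightarrow> 'b \<times> bool \<Rightarrow> int" where
  "letter_sign P l = (if P (fst l) then (if snd l then 1 else -1) else 0)"

definition signed_count :: "('b \<Rightarrow> bool) \<Rightarrow> ('b \<times> bool) list \<Rightarrow> int" where
  "signed_count P w = sum_list (map (letter_sign P) w)"

lemma signed_count_simps [simp]:
  "signed_count P [] = 0"
  "signed_count P (l # w) = letter_sign P l + signed_count P w"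
  "signed_count P (a @ b) = signed_count P a + signed_count P b"
  by (auto simp: signed_count_def)

lemma signed_count_word_inv [simp]: "signed_count P (word_inv w) = - signed_count P w"
  by (induction w) (auto simp: letter_sign_def)

lemma signed_count_replicate: "signed_count P (replicate n l) = int n * letter_sign P l"
  by (induction n) (auto simp: algebra_simps)

lemma signed_count_raag_eq: "raag_eq V E u w \<Longrightarrow> signed_count P u = signed_count P w"
  by (induction rule: raag_eq.induct) (auto simp: letter_sign_def)

lemma abs_letter_sign_le: "\<bar>letter_sign P l\<bar> \<le> 1"
  by (simp add: letter_sign_def)

lemma exp_sum_eq_signed_count: "exp_sum w = signed_count (\<lambda>_. True) w"
  unfolding exp_sum_def signed_count_def letter_sign_def by simp

section \<open>Twisting words\<close>

definition twist_at :: "('b \<Rightarrow> 'b) \<Rightarrow> int \<Rightarrow> int \<Rightarrow> int \<Rightarrow> 'b \<Rightarrow> 'b" where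
  "twist_at \<tau> N q0 q s = (if q mod N = q0 then \<tau> s else s)"

text \<open>The argument q is the signed number of P-letters preceding the current letter.\<close>

fun twist_word ::
  "('b \<Rightarrow> 'b) \<Rightarrow> ('b \<Rightarrow> bool) \<Rightarrow> int \<Rightarrow> int \<Rightarrow> int \<Rightarrow> ('b \<times> bool) list \<Rightarrow> ('b \<times> bool) list"
where
  "twist_word \<tau> P N q0 q [] = []"
| "twist_word \<tau> P N q0 q (l # w) =
     (twist_at \<tau> N q0 q (fst l), snd l) # twist_word \<tau> P N q0 (q + letter_sign P l) w"

definition twist_aut ::
  "'b set \<Rightarrow> ('b \<Rightarrow> 'b \<Rightarrow> bool) \<Rightarrow> ('b \<Rightarrow> 'b) \<Rightarrow> ('b \<Rightarrow> bool) \<Rightarrow> int \<Rightarrow> int \<Rightarrow>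
     ('b \<times> bool) list set \<Rightarrow> ('b \<times> bool) list set"
where
  "twist_aut V E \<tau> P N q0 x =
     (if x \<in> X_verts V E then raag_class V E (twist_word \<tau> P N q0 0 (SOME w. w \<in> x)) else x)"

locale twist =
  fixes V :: "'b set" and E :: "'b \<Rightarrow> 'b \<Rightarrow> bool" and \<tau> :: "'b \<Rightarrow> 'b" and P :: "'b \<Rightarrow> bool"
    and N q0 :: int
  assumes tau_in_V: "s \<in> V \<Longrightarrow> \<tau> s \<in> V"
    and tau_tau: "\<tau> (\<tau> s) = s"
    and tau_edge: "E s t \<Longrightarrow> E (\<tau> s) (\<tau> t)"
    and tau_fixes_P: "P s \<Longrightarrow> \<tau> s = s"
    and tau_fixes_link_left: "E s t \<Longrightarrow> P s \<Longrightarrow> \<tau> t = t"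
    and tau_fixes_link_right: "E s t \<Longrightarrow> P t \<Longrightarrow> \<tau> s = s"
begin

abbreviation "g \<equiv> twist_word \<tau> P N q0"
abbreviation "f \<equiv> twist_aut V E \<tau> P N q0"

lemma P_tau: "P (\<tau> s) = P s"
  by (metis tau_fixes_P tau_tau)

lemma twist_at_twist_at [simp]: "twist_at \<tau> N q0 q (twist_at \<tau> N q0 q s) = s"
  by (simp add: twist_at_def tau_tau)

lemma inj_twist_at: "inj (twist_at \<tau> N q0 q)"
  by (metis injI twist_at_twist_at)

lemma twist_at_in_V: "s \<in> V \<Longrightarrow> twist_at \<tau> N q0 q s \<in> V"
  by (simp add: twist_at_def tau_in_V)

lemma twist_at_edge: "E s t \<Longrightarrow> E (twist_at \<tau> N q0 q s) (twist_at \<tau> N q0 q t)"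
  by (simp add: twist_at_def tau_edge)

lemma letter_sign_twist_at [simp]: "letter_sign P (twist_at \<tau> N q0 q s, e) = letter_sign P (s, e)"
  by (simp add: letter_sign_def twist_at_def P_tau)

lemma twist_at_shift:
  "(P s \<Longrightarrow> \<tau> t = t) \<Longrightarrow> twist_at \<tau> N q0 (q + letter_sign P (s, e)) t = twist_at \<tau> N q0 q t"
  by (cases "P s") (auto simp: twist_at_def letter_sign_def)

lemma twist_word_append: "g q (a @ b) = g q a @ g (q + signed_count P a) b"
  by (induction a arbitrary: q) (auto simp: add.assoc)

lemma signed_count_twist_word:
  assumes "\<And>s. Q (\<tau> s) = Q s"
  shows "signed_count Q (g q w) = signed_count Q w"
  using assms by (induction w arbitrary: q) (auto simp: letter_sign_def twist_at_def)

lemma signed_count_P_twist_word [simp]: "signed_count P (g q w) = signed_count P w"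
  using signed_count_twist_word P_tau by blast

lemma exp_sum_twist_word [simp]: "exp_sum (g q w) = exp_sum w"
  using signed_count_twist_word[of "\<lambda>_. True"] by (simp add: exp_sum_eq_signed_count)

lemma twist_word_in_raag_words: "w \<in> raag_words V \<Longrightarrow> g q w \<in> raag_words V"
  by (induction w arbitrary: q) (auto simp: twist_at_in_V)

lemma twist_word_twist_word [simp]: "g q (g q w) = w"
  by (induction w arbitrary: q) auto

lemma twist_word_cong_mod: "q mod N = q' mod N \<Longrightarrow> g q w = g q' w"
proof (induction w arbitrary: q q')
  case (Cons l w)
  have "(q + letter_sign P l) mod N = (q' + letter_sign P l) mod N"
    using Cons.prems by (rule mod_add_cong) simp
  then have "g (q + letter_sign P l) w = g (q' + letter_sign P l) w"
    by (rule Cons.IH)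
  with Cons.prems show ?case
    by (simp add: twist_at_def)
qed simp

lemma twist_word_eq_self_if_fixed: "(\<And>l. l \<in> set w \<Longrightarrow> \<tau> (fst l) = fst l) \<Longrightarrow> g q w = w"
  by (induction w arbitrary: q) (simp_all add: twist_at_def)

lemma twist_word_eq_map_if_no_P:
  "(\<And>l. l \<in> set w \<Longrightarrow> \<not> P (fst l)) \<Longrightarrow> g q w = map (\<lambda>(s, e). (twist_at \<tau> N q0 q s, e)) w"
  by (induction w arbitrary: q) (auto simp: letter_sign_def)

lemma twist_word_eq_self_if_unreached:
  "(\<And>k. \<bar>k\<bar> \<le> int (length u) \<Longrightarrow> (q + k) mod N \<noteq> q0) \<Longrightarrow> g q u = u"
proof (induction u arbitrary: q)
  case (Cons l u)
  have "g (q + letter_sign P l) u = u"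
  proof (rule Cons.IH)
    fix k assume "\<bar>k\<bar> \<le> int (length u)"
    then have "\<bar>letter_sign P l + k\<bar> \<le> int (length (l # u))"
      using abs_letter_sign_le[of P l] by simp
    then show "(q + letter_sign P l + k) mod N \<noteq> q0"
      using Cons.prems by (simp add: add.assoc)
  qed
  moreover have "q mod N \<noteq> q0"
    using Cons.prems[of 0] by simp
  ultimately show ?case
    by (simp add: twist_at_def)
qed simp

lemma twist_word_pair:
  fixes q :: int and a :: "('b \<times> bool) list"
  assumes "P s \<Longrightarrow> \<tau> t = t"
  defines "q1 \<equiv> q + signed_count P a"
  shows "g q (a @ [(s, e), (t, e')] @ b) =
    g q a @ [(twist_at \<tau> N q0 q1 s, e), (twist_at \<tau> N q0 q1 t, e')] @
      g (q1 + letter_sign P (s, e) + letter_sign P (t, e')) b"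
proof -
  have "twist_at \<tau> N q0 (q1 + letter_sign P (s, e)) t = twist_at \<tau> N q0 q1 t"
    using assms(1) by (rule twist_at_shift)
  then show ?thesis
    by (simp add: twist_word_append q1_def add.assoc)
qed

text \<open>The defining relations are respected because the twist never changes inside a cancelling
  pair, and a commuting pair containing a P-letter consists of letters fixed by \<tau>.\<close>

lemma twist_word_raag_eq: "raag_eq V E u w \<Longrightarrow> raag_eq V E (g q u) (g q w)"
proof (induction rule: raag_eq.induct)
  case (refl w)
  then show ?case by (simp add: twist_word_in_raag_words raag_eq.refl)
next
  case (sym u w)
  show ?case using sym.IH by (rule raag_eq.sym)
next
  case (trans u w z)
  show ?case using trans.IH by (rule raag_eq.trans)
next
  case (cancel s a b e)
  define s' where "s' = twist_at \<tau> N q0 (q + signed_count P a) s"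
  have "letter_sign P (s, e) + letter_sign P (s, \<not> e) = 0"
    by (simp add: letter_sign_def)
  then have "g q (a @ [(s, e), (s, \<not> e)] @ b) = g q a @ [(s', e), (s', \<not> e)] @ g (q + signed_count P a) b"
    using twist_word_pair[of s s q a e "\<not> e" b] tau_fixes_P by (simp add: s'_def add.assoc)
  moreover have "s' \<in> V"
    unfolding s'_def using cancel.hyps(1) by (rule twist_at_in_V)
  ultimately show ?case
    using raag_eq.cancel twist_word_in_raag_words cancel.hyps(2,3) by (metis twist_word_append)
next
  case (commute s t a b e e')
  define s' where "s' = twist_at \<tau> N q0 (q + signed_count P a) s"
  define t' where "t' = twist_at \<tau> N q0 (q + signed_count P a) t"
  define r where "r = q + signed_count P a + letter_sign P (s, e) + letter_sign P (t, e')"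
  have left: "g q (a @ [(s, e), (t, e')] @ b) = g q a @ [(s', e), (t', e')] @ g r b"
    using twist_word_pair tau_fixes_link_left[OF commute.hyps(1)] by (simp add: s'_def t'_def r_def)
  have right: "g q (a @ [(t, e'), (s, e)] @ b) = g q a @ [(t', e'), (s', e)] @ g r b"
    using twist_word_pair tau_fixes_link_right[OF commute.hyps(1)] by (simp add: s'_def t'_def r_def add_ac)
  have "E s' t'"
    unfolding s'_def t'_def using commute.hyps(1) by (rule twist_at_edge)
  moreover have "s' \<in> V" "t' \<in> V"
    unfolding s'_def t'_def using commute.hyps(2,3) by (simp_all add: twist_at_in_V)
  moreover have "g q a \<in> raag_words V" "g r b \<in> raag_words V"
    using commute.hyps(4,5) by (simp_all add: twist_word_in_raag_words)
  ultimately show ?case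
    unfolding left right by (rule raag_eq.commute)
qed

end

section \<open>The twist automorphism of the universal cover\<close>

lemma clique_image:
  assumes "clique V E \<sigma>" "\<And>s. s \<in> V \<Longrightarrow> \<rho> s \<in> V" "\<And>s t. E s t \<Longrightarrow> E (\<rho> s) (\<rho> t)"
  shows "clique V E (\<rho> ` \<sigma>)"
  unfolding clique_def
proof (intro conjI ballI impI)
  show "\<rho> ` \<sigma> \<subseteq> V"
    using assms(1,2) by (auto simp: clique_def)
next
  fix s' t' assume "s' \<in> \<rho> ` \<sigma>" "t' \<in> \<rho> ` \<sigma>" "s' \<noteq> t'"
  then obtain s t where "s \<in> \<sigma>" "t \<in> \<sigma>" "s \<noteq> t" "s' = \<rho> s" "t' = \<rho> t"
    by blast
  then show "E s' t'"
    using assms(1,3) by (simp add: clique_def)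
qed

lemma X_cube_eq_image:
  "X_cube V E u \<sigma> = (\<lambda>ts. raag_class V E (u @ map (\<lambda>s. (s, True)) ts)) ` {ts. distinct ts \<and> set ts \<subseteq> \<sigma>}"
  by (auto simp: X_cube_def)

lemma map_image_distinct_lists:
  assumes "inj_on \<rho> \<sigma>"
  shows "map \<rho> ` {ts. distinct ts \<and> set ts \<subseteq> \<sigma>} = {ts'. distinct ts' \<and> set ts' \<subseteq> \<rho> ` \<sigma>}"
proof (intro equalityI subsetI)
  fix ts' assume "ts' \<in> map \<rho> ` {ts. distinct ts \<and> set ts \<subseteq> \<sigma>}"
  then obtain ts where "distinct ts" "set ts \<subseteq> \<sigma>" "ts' = map \<rho> ts"
    by blast
  then show "ts' \<in> {ts'. distinct ts' \<and> set ts' \<subseteq> \<rho> ` \<sigma>}"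
    using assms by (simp add: distinct_map inj_on_subset image_mono)
next
  fix ts' assume ts': "ts' \<in> {ts'. distinct ts' \<and> set ts' \<subseteq> \<rho> ` \<sigma>}"
  define ts where "ts = map (inv_into \<sigma> \<rho>) ts'"
  have "map \<rho> ts = ts'"
    unfolding ts_def map_map by (rule map_idI) (use ts' in \<open>auto intro: f_inv_into_f\<close>)
  moreover have "distinct ts"
    using ts' assms by (auto simp: ts_def distinct_map intro: inj_on_subset[OF inj_on_inv_into])
  moreover have "set ts \<subseteq> \<sigma>"
    using ts' by (auto simp: ts_def inv_into_into)
  ultimately show "ts' \<in> map \<rho> ` {ts. distinct ts \<and> set ts \<subseteq> \<sigma>}"
    by (intro image_eqI[where x = ts]) simp_all
qed

lemma X_cube_image:
  assumes "inj_on \<rho> \<sigma>"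
  shows "X_cube V E u (\<rho> ` \<sigma>)
    = (\<lambda>ts. raag_class V E (u @ map (\<lambda>s. (s, True)) (map \<rho> ts))) ` {ts. distinct ts \<and> set ts \<subseteq> \<sigma>}"
  by (simp add: X_cube_eq_image map_image_distinct_lists[OF assms, symmetric] image_image)

context twist
begin

abbreviation "cls \<equiv> raag_class V E"

lemma twist_aut_raag_class:
  assumes "u \<in> raag_words V"
  shows "f (cls u) = cls (g 0 u)"
proof -
  have "cls (g 0 (SOME w. w \<in> cls u)) = cls (g 0 u)"
    by (rule raag_class_eqI[symmetric] twist_word_raag_eq raag_eq_some_elem assms)+
  then show ?thesis
    using assms by (simp add: twist_aut_def)
qed

lemma twist_aut_outside: "x \<notin> X_verts V E \<Longrightarrow> f x = x"
  by (simp add: twist_aut_def)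

lemma twist_aut_in_X_verts: "x \<in> X_verts V E \<Longrightarrow> f x \<in> X_verts V E"
  by (auto simp: X_verts_iff twist_aut_raag_class twist_word_in_raag_words)

lemma twist_aut_comp_self: "f \<circ> f = id"
  by (rule X_verts_fun_eqI[where V = V and E = E])
    (simp_all add: twist_aut_raag_class twist_aut_outside twist_word_in_raag_words)

lemma twist_aut_twist_aut [simp]: "f (f x) = x"
  using fun_cong[OF twist_aut_comp_self, of x] by (simp only: comp_apply id_apply)

lemma bij_betw_twist_aut: "bij_betw f (X_verts V E) (X_verts V E)"
  by (rule bij_betw_byWitness[where f' = f]) (auto intro: twist_aut_in_X_verts)

lemma aut_inv_twist_aut: "aut_inv V E f = f"
proof -
  have "inv_into (X_verts V E) f x = f x" if "x \<in> X_verts V E" for x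
    using bij_betw_inv_into_left[OF bij_betw_twist_aut twist_aut_in_X_verts[OF that]] by simp
  then show ?thesis
    by (auto simp: aut_inv_def twist_aut_outside fun_eq_iff)
qed

text \<open>If the clique contains a P-vertex, all of it is fixed by \<tau>; otherwise the P-count does not
  change along the cube, so every letter is twisted in the same way.\<close>

lemma twist_word_on_clique:
  assumes "clique V E \<sigma>"
  obtains \<rho> where "inj_on \<rho> \<sigma>" "clique V E (\<rho> ` \<sigma>)"
    "\<And>ts. set ts \<subseteq> \<sigma> \<Longrightarrow> g q (map (\<lambda>s. (s, True)) ts) = map (\<lambda>s. (s, True)) (map \<rho> ts)"
proof (cases "\<exists>s\<in>\<sigma>. P s")
  case True
  then obtain s0 where s0: "s0 \<in> \<sigma>" "P s0" by blast
  have "\<tau> t = t" if "t \<in> \<sigma>" for t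
  proof (cases "t = s0")
    case True
    then show ?thesis using s0(2) tau_fixes_P by simp
  next
    case False
    then have "E s0 t" using assms s0(1) that by (simp add: clique_def)
    then show ?thesis using s0(2) by (rule tau_fixes_link_left)
  qed
  then show ?thesis
    using assms by (intro that[of id]) (auto intro!: twist_word_eq_self_if_fixed)
next
  case False
  have "g q (map (\<lambda>s. (s, True)) ts) = map (\<lambda>s. (s, True)) (map (twist_at \<tau> N q0 q) ts)"
    if "set ts \<subseteq> \<sigma>" for ts
    using that False by (subst twist_word_eq_map_if_no_P) auto
  moreover have "clique V E (twist_at \<tau> N q0 q ` \<sigma>)"
    using assms by (rule clique_image) (auto intro: twist_at_in_V twist_at_edge)
  ultimately show ?thesis
    using inj_on_subset[OF inj_twist_at subset_UNIV] that by blast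
qed

lemma twist_aut_image_X_cube:
  assumes u: "u \<in> raag_words V" and \<sigma>: "clique V E \<sigma>"
  shows "f ` X_cube V E u \<sigma> \<in> X_cubes V E"
proof -
  obtain \<rho> where \<rho>: "inj_on \<rho> \<sigma>" "clique V E (\<rho> ` \<sigma>)"
    and g_\<sigma>: "\<And>ts. set ts \<subseteq> \<sigma> \<Longrightarrow>
      g (signed_count P u) (map (\<lambda>s. (s, True)) ts) = map (\<lambda>s. (s, True)) (map \<rho> ts)"
    using twist_word_on_clique[OF \<sigma>] by metis
  define T where "T = {ts. distinct ts \<and> set ts \<subseteq> \<sigma>}"
  have f_cube_vertex:
    "f (cls (u @ map (\<lambda>s. (s, True)) ts)) = cls (g 0 u @ map (\<lambda>s. (s, True)) (map \<rho> ts))"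
    if "ts \<in> T" for ts
  proof -
    have "u @ map (\<lambda>s. (s, True)) ts \<in> raag_words V"
      using that \<sigma> u by (auto simp: T_def clique_def raag_words_def)
    then show ?thesis
      using that by (simp add: T_def twist_aut_raag_class twist_word_append g_\<sigma>)
  qed
  have "f ` X_cube V E u \<sigma> = (\<lambda>ts. f (cls (u @ map (\<lambda>s. (s, True)) ts))) ` T"
    by (simp add: T_def X_cube_eq_image image_image)
  also have "\<dots> = (\<lambda>ts. cls (g 0 u @ map (\<lambda>s. (s, True)) (map \<rho> ts))) ` T"
    by (rule image_cong[OF HOL.refl f_cube_vertex])
  also have "\<dots> = X_cube V E (g 0 u) (\<rho> ` \<sigma>)"
    by (simp add: T_def X_cube_image[OF \<rho>(1)])
  finally show ?thesis
    using twist_word_in_raag_words[OF u] \<rho>(2) unfolding X_cubes_def by blast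
qed

lemma twist_aut_in_cub_aut: "f \<in> cub_aut V E"
proof -
  have image: "f ` C \<in> X_cubes V E" if "C \<in> X_cubes V E" for C
    using that twist_aut_image_X_cube by (auto simp: X_cubes_def)
  moreover have "C \<in> X_cubes V E" if "f ` C \<in> X_cubes V E" for C
    using image[OF that] by (simp add: image_image)
  ultimately show ?thesis
    unfolding cub_aut_def using bij_betw_twist_aut image twist_aut_outside by blast
qed

text \<open>Reading l returns the P-count to the same residue, so the twist of l @ a is the twist of l
  followed by the twist of a.\<close>

lemma twist_aut_conj_deck:
  assumes l: "l \<in> raag_words V" and "signed_count P l mod N = 0"
  shows "f \<circ> deck V E l \<circ> f = deck V E (g 0 l)"
proof (rule X_verts_fun_eqI[where V = V and E = E])
  fix a assume a: "a \<in> raag_words V"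
  have "g (signed_count P l) (g 0 a) = g 0 (g 0 a)"
    by (rule twist_word_cong_mod) (simp add: assms(2))
  then show "(f \<circ> deck V E l \<circ> f) (cls a) = deck V E (g 0 l) (cls a)"
    using a l by (simp add: twist_aut_raag_class deck_raag_class twist_word_in_raag_words
      twist_word_append)
qed (simp add: twist_aut_outside deck_outside)

end

section \<open>Commensurating the deck groups\<close>

definition word_subgroup :: "'b set \<Rightarrow> ('b \<times> bool) list set \<Rightarrow> bool" where
  "word_subgroup V W \<longleftrightarrow>
     W \<subseteq> raag_words V \<and> (\<forall>a\<in>W. \<forall>b\<in>W. a @ b \<in> W) \<and> (\<forall>a\<in>W. word_inv a \<in> W)"

lemma word_subgroup_raag_words: "word_subgroup V (raag_words V)"
  by (simp add: word_subgroup_def)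

lemma word_subgroup_exp_sum_zero: "word_subgroup V {w \<in> raag_words V. exp_sum w = 0}"
  by (simp add: word_subgroup_def exp_sum_eq_signed_count)

lemma finite_index_if_finitely_many_classes:
  assumes stable: "\<And>l. l \<in> \<Lambda> \<Longrightarrow> (\<lambda>k. l \<circ> k) ` K = K"
    and "finite (\<rho> ` W)"
    and same_class: "\<And>w w'. w \<in> W \<Longrightarrow> w' \<in> W \<Longrightarrow> \<rho> w = \<rho> w' \<Longrightarrow> \<exists>l\<in>\<Lambda>. h w' = h w \<circ> l"
  shows "finite_index K (h ` W)"
proof -
  have same_coset: "(\<lambda>k. h w' \<circ> k) ` K = (\<lambda>k. h w \<circ> k) ` K"
    if ww': "w \<in> W" "w' \<in> W" "\<rho> w = \<rho> w'" for w w'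
  proof -
    obtain l where "l \<in> \<Lambda>" "h w' = h w \<circ> l"
      using same_class[OF ww'] by blast
    then have "(\<lambda>k. h w' \<circ> k) ` K = (\<lambda>k. h w \<circ> k) ` ((\<lambda>k. l \<circ> k) ` K)"
      by (simp add: image_image comp_assoc)
    with stable[OF \<open>l \<in> \<Lambda>\<close>] show ?thesis
      by simp
  qed
  define r where "r i = (SOME w. w \<in> W \<and> \<rho> w = i)" for i
  have "{(\<lambda>k. h' \<circ> k) ` K | h'. h' \<in> h ` W} \<subseteq> (\<lambda>i. (\<lambda>k. h (r i) \<circ> k) ` K) ` (\<rho> ` W)"
  proof
    fix C assume "C \<in> {(\<lambda>k. h' \<circ> k) ` K | h'. h' \<in> h ` W}"
    then obtain w where w: "w \<in> W" "C = (\<lambda>k. h w \<circ> k) ` K"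
      by blast
    have "r (\<rho> w) \<in> W \<and> \<rho> (r (\<rho> w)) = \<rho> w"
      unfolding r_def by (rule someI[of _ w]) (simp add: w(1))
    then have "C = (\<lambda>k. h (r (\<rho> w)) \<circ> k) ` K"
      using same_coset[of "r (\<rho> w)" w] w by simp
    then show "C \<in> (\<lambda>i. (\<lambda>k. h (r i) \<circ> k) ` K) ` (\<rho> ` W)"
      using w(1) by blast
  qed
  then show ?thesis
    unfolding finite_index_def using assms(2) by (rule finite_subset[OF _ finite_imageI])
qed

lemma left_comp_image_Int:
  assumes "l' \<circ> l = id" "(\<lambda>k. l \<circ> k) ` A = A" "(\<lambda>k. l \<circ> k) ` B = B"
  shows "(\<lambda>k. l \<circ> k) ` (B \<inter> A) = B \<inter> A"
proof -
  have "inj (\<lambda>k. l \<circ> k)"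
    by (rule inj_on_inverseI[where g = "\<lambda>k. l' \<circ> k"]) (simp add: comp_assoc[symmetric] assms(1))
  then show ?thesis
    using image_Int assms(2,3) by metis
qed

lemma deck_left_comp_image:
  assumes W: "word_subgroup V W" and m: "m \<in> W"
  shows "(\<lambda>k. deck V E m \<circ> k) ` (deck V E ` W) = deck V E ` W"
proof -
  have words: "m \<in> raag_words V" "\<And>a. a \<in> W \<Longrightarrow> a \<in> raag_words V"
    using W m by (auto simp: word_subgroup_def)
  have "(\<lambda>k. deck V E m \<circ> k) ` (deck V E ` W) = (\<lambda>a. deck V E (m @ a)) ` W"
    by (auto simp: image_image deck_append words intro!: image_cong)
  also have "\<dots> = deck V E ` W"
  proof
    show "(\<lambda>a. deck V E (m @ a)) ` W \<subseteq> deck V E ` W"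
      using W m by (auto simp: word_subgroup_def)
    show "deck V E ` W \<subseteq> (\<lambda>a. deck V E (m @ a)) ` W"
    proof
      fix k assume "k \<in> deck V E ` W"
      then obtain a where a: "a \<in> W" "k = deck V E a"
        by blast
      then have "k = deck V E (m @ word_inv m @ a)"
        by (simp add: deck_cancel words)
      moreover have "word_inv m @ a \<in> W"
        using W m a(1) by (simp add: word_subgroup_def)
      ultimately show "k \<in> (\<lambda>a. deck V E (m @ a)) ` W"
        by blast
    qed
  qed
  finally show ?thesis .
qed

context twist
begin

lemma twist_conj_left_comp_image:
  assumes "word_subgroup V W" "m \<in> W"
  shows "(\<lambda>k. (f \<circ> deck V E m \<circ> f) \<circ> k) ` ((\<lambda>w. f \<circ> deck V E w \<circ> f) ` W)
    = (\<lambda>w. f \<circ> deck V E w \<circ> f) ` W"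
proof -
  have "(f \<circ> deck V E m \<circ> f) \<circ> (f \<circ> k \<circ> f) = f \<circ> (deck V E m \<circ> k) \<circ> f" for k
    by (simp add: fun_eq_iff)
  then have "(\<lambda>k. (f \<circ> deck V E m \<circ> f) \<circ> k) ` ((\<lambda>w. f \<circ> deck V E w \<circ> f) ` W)
      = (\<lambda>k. f \<circ> k \<circ> f) ` ((\<lambda>k. deck V E m \<circ> k) ` (deck V E ` W))"
    by (simp add: image_image)
  also have "\<dots> = (\<lambda>k. f \<circ> k \<circ> f) ` (deck V E ` W)"
    by (simp only: deck_left_comp_image[OF assms])
  also have "\<dots> = (\<lambda>w. f \<circ> deck V E w \<circ> f) ` W"
    by (simp add: image_image)
  finally show ?thesis .
qed

lemma left_comp_deck_image_Int_conj:
  assumes W: "word_subgroup V W" and twist_W: "\<And>w. w \<in> W \<Longrightarrow> g 0 w \<in> W"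
    and l: "l \<in> W" "signed_count P l mod N = 0"
  shows "(\<lambda>k. deck V E l \<circ> k) ` ((\<lambda>w. f \<circ> deck V E w \<circ> f) ` W \<inter> deck V E ` W)
    = (\<lambda>w. f \<circ> deck V E w \<circ> f) ` W \<inter> deck V E ` W"
proof (rule left_comp_image_Int)
  have l_word: "l \<in> raag_words V"
    using W l(1) by (auto simp: word_subgroup_def)
  then show "deck V E (word_inv l) \<circ> deck V E l = id"
    by (rule deck_word_inv_comp)
  show "(\<lambda>k. deck V E l \<circ> k) ` (deck V E ` W) = deck V E ` W"
    using W l(1) by (rule deck_left_comp_image)
  have "deck V E l = f \<circ> deck V E (g 0 l) \<circ> f"
    using twist_aut_conj_deck[of "g 0 l"] l_word l(2) by (simp add: twist_word_in_raag_words)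
  then show "(\<lambda>k. deck V E l \<circ> k) ` ((\<lambda>w. f \<circ> deck V E w \<circ> f) ` W) = (\<lambda>w. f \<circ> deck V E w \<circ> f) ` W"
    using twist_conj_left_comp_image[OF W twist_W[OF l(1)]] by simp
qed

text \<open>The words whose P-count is divisible by N form a subgroup of index at most N, on whose deck
  transformations conjugation by the twist acts as the twist of words.\<close>

lemma twist_aut_in_commensurator:
  assumes "0 < N" and W: "word_subgroup V W" and twist_W: "\<And>w. w \<in> W \<Longrightarrow> g 0 w \<in> W"
  shows "f \<in> commensurator V E (deck V E ` W)"
proof -
  let ?D = "deck V E"
  let ?residue = "\<lambda>w. signed_count P w mod N"
  let ?A = "?D ` W"
  let ?B = "(\<lambda>w. f \<circ> ?D w \<circ> f) ` W"
  define L where "L = {l \<in> W. ?residue l = 0}"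
  have words: "\<And>w. w \<in> W \<Longrightarrow> w \<in> raag_words V"
    using W by (auto simp: word_subgroup_def)
  have stable: "(\<lambda>k. k' \<circ> k) ` (?B \<inter> ?A) = ?B \<inter> ?A" if k': "k' \<in> ?D ` L" for k'
  proof -
    obtain l where "l \<in> W" "?residue l = 0" "k' = ?D l"
      using k' by (auto simp: L_def)
    then show ?thesis
      using left_comp_deck_image_Int_conj[OF W twist_W] by simp
  qed
  have finite_residues: "finite (?residue ` W)"
    by (rule finite_subset[of _ "{0..<N}"]) (auto simp: \<open>0 < N\<close>)
  have quotient_in_L: "word_inv w @ w' \<in> L" and deck_quotient: "?D w' = ?D w \<circ> ?D (word_inv w @ w')"
    if "w \<in> W" "w' \<in> W" "?residue w = ?residue w'" for w w'
  proof -
    have "(signed_count P w' - signed_count P w) mod N = 0"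
      using that(3) by (simp add: mod_diff_eq[symmetric])
    then show "word_inv w @ w' \<in> L"
      using W that(1,2) by (simp add: L_def word_subgroup_def algebra_simps)
    show "?D w' = ?D w \<circ> ?D (word_inv w @ w')"
      using that(1,2) by (simp add: deck_append deck_cancel words)
  qed
  have "finite_index (?B \<inter> ?A) ?A"
    using stable finite_residues
  proof (rule finite_index_if_finitely_many_classes)
    fix w w' assume "w \<in> W" "w' \<in> W" "?residue w = ?residue w'"
    then show "\<exists>l\<in>?D ` L. ?D w' = ?D w \<circ> l"
      using quotient_in_L deck_quotient by blast
  qed
  moreover have "finite_index (?B \<inter> ?A) ?B"
    using stable finite_residues
  proof (rule finite_index_if_finitely_many_classes)
    fix w w' assume ww': "w \<in> W" "w' \<in> W" "?residue w = ?residue w'"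
    define m where "m = word_inv w @ w'"
    have m: "m \<in> L"
      unfolding m_def using ww' by (rule quotient_in_L)
    have "f \<circ> ?D w' \<circ> f = (f \<circ> ?D w \<circ> f) \<circ> (f \<circ> ?D m \<circ> f)"
      using deck_quotient[OF ww'] by (simp add: m_def fun_eq_iff)
    also have "\<dots> = (f \<circ> ?D w \<circ> f) \<circ> ?D (g 0 m)"
      using m words by (simp add: L_def twist_aut_conj_deck)
    finally have "f \<circ> ?D w' \<circ> f = (f \<circ> ?D w \<circ> f) \<circ> ?D (g 0 m)" .
    moreover have "g 0 m \<in> L"
      using m twist_W by (simp add: L_def)
    ultimately show "\<exists>l\<in>?D ` L. f \<circ> ?D w' \<circ> f = (f \<circ> ?D w \<circ> f) \<circ> l"
      by blast
  qed
  moreover have "(\<lambda>a. f \<circ> a \<circ> aut_inv V E f) ` ?A = ?B"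
    by (simp add: aut_inv_twist_aut image_image)
  ultimately show ?thesis
    unfolding commensurator_def Let_def using twist_aut_in_cub_aut by simp
qed

lemma twist_aut_in_commensurators:
  assumes "0 < N"
  shows "f \<in> commensurator V E (BB_sub V E) \<inter> commensurator V E (RAAG_sub V E)"
  unfolding BB_sub_def RAAG_sub_def
  using twist_aut_in_commensurator[OF assms word_subgroup_exp_sum_zero]
    twist_aut_in_commensurator[OF assms word_subgroup_raag_words]
  by (simp add: twist_word_in_raag_words)

end

context twist
begin

lemma twist_aut_eq_id_if_unreached:
  assumes "\<And>q. q mod N \<noteq> q0"
  shows "f = id"
  by (rule X_verts_fun_eqI[where V = V and E = E])
    (simp_all add: assms twist_aut_raag_class twist_aut_outside twist_word_eq_self_if_unreached)

lemma twist_aut_raag_class_eq_self_if_unreached: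
  assumes "u \<in> raag_words V" and "\<And>k. \<bar>k\<bar> \<le> int (length u) \<Longrightarrow> k mod N \<noteq> q0"
  shows "f (cls u) = cls u"
  using assms by (simp add: twist_aut_raag_class twist_word_eq_self_if_unreached)

text \<open>After n letters a from P the residue q0 is reached, so the next letter b is twisted.\<close>

lemma twist_aut_ne_id:
  assumes "a \<in> V" "P a" "b \<in> V" "\<tau> b \<noteq> b" "int n mod N = q0"
  shows "f \<noteq> id"
proof
  assume f_id: "f = id"
  define r where "r = replicate n (a, True)"
  have r: "r \<in> raag_words V"
    using assms(1) by (simp add: r_def raag_words_def)
  have "g 0 r = r"
    unfolding r_def using tau_fixes_P[OF assms(2)] by (intro twist_word_eq_self_if_fixed) simp
  moreover have "signed_count P r = int n"
    using assms(2) by (simp add: r_def signed_count_replicate letter_sign_def)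
  ultimately have "g 0 (r @ [(b, True)]) = r @ [(\<tau> b, True)]"
    using assms(5) by (simp add: twist_word_append twist_at_def)
  then have "cls (r @ [(b, True)]) = cls (r @ [(\<tau> b, True)])"
    using twist_aut_raag_class[of "r @ [(b, True)]"] f_id r assms(3) by simp
  then have "raag_eq V E (r @ [(b, True)]) (r @ [(\<tau> b, True)])"
    using r assms(3) tau_in_V by (simp add: raag_class_eq_iff)
  then have "signed_count (\<lambda>s. s = b) (r @ [(b, True)]) = signed_count (\<lambda>s. s = b) (r @ [(\<tau> b, True)])"
    by (rule signed_count_raag_eq)
  with assms(4) show False
    by (simp add: letter_sign_def)
qed

end

lemma mod_ne_if_abs_le:
  fixes k :: int
  assumes "\<bar>k\<bar> \<le> int M"
  shows "k mod (2 * int M + 3) \<noteq> int M + 1"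
proof (cases "0 \<le> k")
  case True
  then show ?thesis using assms by simp
next
  case False
  then have "(k + (2 * int M + 3)) mod (2 * int M + 3) = k + (2 * int M + 3)"
    using assms by (intro mod_pos_pos_trivial) auto
  then have "k mod (2 * int M + 3) = k + (2 * int M + 3)"
    by simp
  then show ?thesis using assms False by simp
qed

text \<open>Choosing M at least the word length of representatives of the finitely many given vertices,
  the residue M + 1 modulo 2M + 3 is never reached while reading them.\<close>

lemma twist_aut_fixes_finite_set:
  assumes "twist V E \<tau> P" and "finite F" "F \<subseteq> X_verts V E"
  obtains M where "\<And>x. x \<in> F \<Longrightarrow> twist_aut V E \<tau> P (2 * int M + 3) (int M + 1) x = x"
proof -
  have "\<forall>x\<in>F. \<exists>u. u \<in> raag_words V \<and> x = raag_class V E u"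
    using assms(3) unfolding subset_eq X_verts_iff by blast
  then obtain rep where rep: "\<forall>x\<in>F. rep x \<in> raag_words V \<and> x = raag_class V E (rep x)"
    by (rule bchoice[elim_format]) blast
  define M where "M = (\<Sum>x\<in>F. length (rep x))"
  have "twist_aut V E \<tau> P (2 * int M + 3) (int M + 1) x = x" if "x \<in> F" for x
  proof -
    have "length (rep x) \<le> M"
      unfolding M_def using that assms(2) by (intro member_le_sum) simp_all
    then show ?thesis
      using rep that mod_ne_if_abs_le[of _ M]
        twist.twist_aut_raag_class_eq_self_if_unreached[OF assms(1)]
      by fastforce
  qed
  then show ?thesis
    by (rule that)
qed

section \<open>Non-discreteness in the automorphism group\<close>

definition pointwise_stabiliser ::
  "'b set \<Rightarrow> ('b \<Rightarrow> 'b \<Rightarrow> bool) \<Rightarrow> ('b \<times> bool) list set set \<Rightarrow>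
     (('b \<times> bool) list set \<Rightarrow> ('b \<times> bool) list set) set"
where
  "pointwise_stabiliser V E F = {f \<in> cub_aut V E. \<forall>x\<in>F. f x = x}"

lemma pointwise_stabiliser_Un:
  "pointwise_stabiliser V E (F1 \<union> F2) = pointwise_stabiliser V E F1 \<inter> pointwise_stabiliser V E F2"
  by (auto simp: pointwise_stabiliser_def)

lemma aut_topology_open_contains_stabiliser:
  assumes "openin (aut_topology V E) U" "id \<in> U"
  obtains F where "finite F" "F \<subseteq> X_verts V E" "pointwise_stabiliser V E F \<subseteq> U"
proof -
  have "generate_topology_on {{f \<in> cub_aut V E. \<forall>x\<in>F. f x = \<phi> x} | F \<phi>.
      finite F \<and> F \<subseteq> X_verts V E \<and> \<phi> \<in> cub_aut V E} U"
    using assms(1) by (simp add: aut_topology_def openin_topology_generated_by_iff)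
  then have "\<exists>F. finite F \<and> F \<subseteq> X_verts V E \<and> pointwise_stabiliser V E F \<subseteq> U"
    using assms(2)
  proof (induction rule: generate_topology_on.induct)
    case (Int a b)
    have "id \<in> a" "id \<in> b"
      using Int.prems by blast+
    then obtain F1 F2
      where "finite F1" "F1 \<subseteq> X_verts V E" "pointwise_stabiliser V E F1 \<subseteq> a"
        and "finite F2" "F2 \<subseteq> X_verts V E" "pointwise_stabiliser V E F2 \<subseteq> b"
      using Int.IH by blast
    then show ?case
      by (intro exI[of _ "F1 \<union> F2"]) (auto simp: pointwise_stabiliser_Un)
  next
    case (UN K)
    obtain k where k: "k \<in> K" "id \<in> k"
      using UN.prems by (elim UnionE)
    then obtain F where "finite F" "F \<subseteq> X_verts V E" "pointwise_stabiliser V E F \<subseteq> k"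
      using UN.IH by blast
    with Union_upper[OF k(1)] show ?case
      by (intro exI[of _ F]) auto
  next
    case (Basis s)
    then obtain F \<phi> where s: "s = {f \<in> cub_aut V E. \<forall>x\<in>F. f x = \<phi> x}" "finite F" "F \<subseteq> X_verts V E"
      by blast
    with Basis.prems have "pointwise_stabiliser V E F \<subseteq> s"
      by (auto simp: pointwise_stabiliser_def)
    with s(2,3) show ?case
      by (intro exI[of _ F]) simp
  qed simp
  then show ?thesis
    using that by blast
qed

lemma not_discrete_in_aut_topology:
  assumes "id \<in> S"
    and "\<And>F. finite F \<Longrightarrow> F \<subseteq> X_verts V E \<Longrightarrow> \<exists>f \<in> S \<inter> pointwise_stabiliser V E F. f \<noteq> id"
  shows "\<not> discrete_in (aut_topology V E) S"
proof
  assume "discrete_in (aut_topology V E) S"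
  then have "openin (subtopology (aut_topology V E) S) {id}"
    using assms(1) by (simp add: discrete_in_def)
  then obtain U where U: "openin (aut_topology V E) U" "{id} = U \<inter> S"
    by (auto simp: openin_subtopology)
  have "id \<in> U"
    using U(2) by blast
  with U(1) obtain F where F: "finite F" "F \<subseteq> X_verts V E" "pointwise_stabiliser V E F \<subseteq> U"
    by (rule aut_topology_open_contains_stabiliser)
  with assms(2) obtain f where "f \<in> S" "f \<in> pointwise_stabiliser V E F" "f \<noteq> id"
    by blast
  with F(3) U(2) show False
    by blast
qed

definition swap_copies_2_3 :: "nat \<times> 'a \<Rightarrow> nat \<times> 'a" where
  "swap_copies_2_3 = map_prod (Transposition.transpose 2 3) id"

lemma swap_copies_2_3_apply [simp]: "swap_copies_2_3 (i, x) = (Transposition.transpose 2 3 i, x)"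
  by (simp add: swap_copies_2_3_def)

lemma swap_copies_2_3_fixes_0_1: "fst s \<in> {0, 1} \<Longrightarrow> swap_copies_2_3 s = s"
  by (cases s) auto

lemma swap_copies_2_3_wedge_vert:
  "swap_copies_2_3 (wedge_vert v i x) = wedge_vert v (Transposition.transpose 2 3 i) x"
  by (simp add: swap_copies_2_3_def wedge_vert_def)

lemma transpose_2_3_less_4: "Transposition.transpose 2 3 i < 4 \<longleftrightarrow> i < (4 :: nat)"
  by (auto simp: Transposition.transpose_def)

lemma wedge4_E_copy_1_neighbours:
  assumes "wedge4_E EG v s t" "fst s = 1 \<or> fst t = 1"
  shows "fst s \<in> {0, 1} \<and> fst t \<in> {0, 1}"
  using assms by (auto simp: wedge4_E_def wedge_vert_def split: if_splits)

lemma twist_swap_copies_2_3: "twist (wedge4_V VG v) (wedge4_E EG v) swap_copies_2_3 (\<lambda>s. fst s = 1)"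
proof
  fix s assume "s \<in> wedge4_V VG v"
  then obtain i x where "i < 4" "x \<in> VG" "s = wedge_vert v i x"
    by (auto simp: wedge4_V_def)
  then have "swap_copies_2_3 s = wedge_vert v (Transposition.transpose 2 3 i) x"
    "Transposition.transpose 2 3 i < 4" "x \<in> VG"
    by (simp_all add: swap_copies_2_3_wedge_vert transpose_2_3_less_4)
  then show "swap_copies_2_3 s \<in> wedge4_V VG v"
    unfolding wedge4_V_def by blast
next
  fix s t assume "wedge4_E EG v s t"
  then obtain i x y where "i < 4" "EG x y" "s = wedge_vert v i x" "t = wedge_vert v i y"
    by (auto simp: wedge4_E_def)
  then have "swap_copies_2_3 s = wedge_vert v (Transposition.transpose 2 3 i) x"
    "swap_copies_2_3 t = wedge_vert v (Transposition.transpose 2 3 i) y"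
    "Transposition.transpose 2 3 i < 4" "EG x y"
    by (simp_all add: swap_copies_2_3_wedge_vert transpose_2_3_less_4)
  then show "wedge4_E EG v (swap_copies_2_3 s) (swap_copies_2_3 t)"
    unfolding wedge4_E_def by blast
next
  fix s t assume "wedge4_E EG v s t" "fst s = 1"
  then show "swap_copies_2_3 t = t"
    using wedge4_E_copy_1_neighbours[of EG v s t] by (intro swap_copies_2_3_fixes_0_1) simp
next
  fix s t assume "wedge4_E EG v s t" "fst t = 1"
  then show "swap_copies_2_3 s = s"
    using wedge4_E_copy_1_neighbours[of EG v s t] by (intro swap_copies_2_3_fixes_0_1) simp
next
  fix s :: "nat \<times> 'a"
  show "swap_copies_2_3 (swap_copies_2_3 s) = s"
    by (cases s) simp
  show "fst s = 1 \<Longrightarrow> swap_copies_2_3 s = s"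
    by (rule swap_copies_2_3_fixes_0_1) simp
qed

lemma pair_in_wedge4_V:
  assumes "i < 4" "x \<in> VG" "x \<noteq> v"
  shows "(i, x) \<in> wedge4_V VG v"
  unfolding wedge4_V_def
  by (intro CollectI exI[of _ i] exI[of _ x]) (simp add: assms wedge_vert_def)

lemma wedge4_twist_aut_fixing_finite_set:
  fixes VG :: "'a set" and EG :: "'a \<Rightarrow> 'a \<Rightarrow> bool" and v w :: 'a
  defines "VL \<equiv> wedge4_V VG v" and "EL \<equiv> wedge4_E EG v"
  assumes "w \<in> VG" "w \<noteq> v" and "finite F" "F \<subseteq> X_verts VL EL"
  shows "\<exists>f \<in> commensurator VL EL (BB_sub VL EL) \<inter> commensurator VL EL (RAAG_sub VL EL)
    \<inter> pointwise_stabiliser VL EL F. f \<noteq> id"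
proof -
  have twist: "twist VL EL swap_copies_2_3 (\<lambda>s. fst s = 1)"
    unfolding VL_def EL_def by (rule twist_swap_copies_2_3)
  obtain M where fixes_F:
    "\<And>x. x \<in> F \<Longrightarrow> twist_aut VL EL swap_copies_2_3 (\<lambda>s. fst s = 1) (2 * int M + 3) (int M + 1) x = x"
    using twist_aut_fixes_finite_set[OF twist assms(5,6)] by blast
  let ?f = "twist_aut VL EL swap_copies_2_3 (\<lambda>s. fst s = 1) (2 * int M + 3) (int M + 1)"
  have "?f \<in> commensurator VL EL (BB_sub VL EL) \<inter> commensurator VL EL (RAAG_sub VL EL)"
    by (rule twist.twist_aut_in_commensurators[OF twist]) simp
  moreover have "?f \<in> pointwise_stabiliser VL EL F"
    using twist.twist_aut_in_cub_aut[OF twist] fixes_F by (simp add: pointwise_stabiliser_def)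
  moreover have "?f \<noteq> id"
  proof (rule twist.twist_aut_ne_id[OF twist])
    show "(1, w) \<in> VL" "(2, w) \<in> VL"
      unfolding VL_def using assms(3,4) by (simp_all add: pair_in_wedge4_V)
    show "swap_copies_2_3 (2, w) \<noteq> (2, w)"
      by simp
    show "int (Suc M) mod (2 * int M + 3) = int M + 1"
      by simp
  qed simp
  ultimately show ?thesis
    by blast
qed

theorem corollary4p7:
  fixes VG :: "'a set" and EG :: "'a \<Rightarrow> 'a \<Rightarrow> bool" and v w :: 'a
  assumes "simplicial_graph VG EG"
    and "v \<in> VG" and "w \<in> VG" and "w \<noteq> v"
  defines "VL \<equiv> wedge4_V VG v" and "EL \<equiv> wedge4_E EG v"
  shows "\<not> discrete_in (aut_topology VL EL)
            (commensurator VL EL (BB_sub VL EL) \<inter> commensurator VL EL (RAAG_sub VL EL))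
       \<and> \<not> discrete_in (aut_topology VL EL) (commensurator VL EL (BB_sub VL EL))"
proof -
  \<comment> \<open>the twist works for any edge relation\<close>
  let ?C_BB = "commensurator VL EL (BB_sub VL EL)"
  let ?S = "?C_BB \<inter> commensurator VL EL (RAAG_sub VL EL)"
  have twist: "twist VL EL swap_copies_2_3 (\<lambda>s. fst s = 1)"
    unfolding VL_def EL_def by (rule twist_swap_copies_2_3)
  have id: "id \<in> ?S"
    \<comment> \<open>the identity is the twist by the residue 1 modulo 1, which is never reached\<close>
    using twist.twist_aut_in_commensurators[OF twist, of 1 1]
      twist.twist_aut_eq_id_if_unreached[OF twist, of 1 1]
    by simp
  have moves: "\<exists>f \<in> ?S \<inter> pointwise_stabiliser VL EL F. f \<noteq> id"
    if "finite F" "F \<subseteq> X_verts VL EL" for F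
    using that unfolding VL_def EL_def by (rule wedge4_twist_aut_fixing_finite_set[OF assms(3,4)])
  have "\<not> discrete_in (aut_topology VL EL) ?S"
    using id moves by (rule not_discrete_in_aut_topology)
  moreover have "\<not> discrete_in (aut_topology VL EL) ?C_BB"
    using id moves by (intro not_discrete_in_aut_topology) blast+
  ultimately show ?thesis ..
qed

end
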